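(* Let $\mathcal C\subseteq(S^2)^n$ be any nonempty finite set and let $x,y$ be drawn independently and uniformly at random from $\mathcal C$. Then for every $S\subseteq[n]$, \[ \Pr\bigl[x_s\not\perp y_s\text{ for all } s\in S\bigr]\ \ge\ 3^{-|S|}. \]
   Context: $S^2$ is the unit sphere in $\mathbb R^3$; $x_s$ denotes the $s$-th coordinate (a unit vector in $\mathbb R^3$) of $x\in(S^2)^n$, and $u\not\perp v$ means $\langle u,v\rangle\ne0$. *)

theory Defs
  imports "HOL-Analysis.Analysis"
begin

text \<open>Points of (S^2)^n are represented as functions nat => real^3 whose
coordinates s < n are unit vectors and which are 0 at indices s >= n.\<close>

definition sphere_tuples :: "nat \<Rightarrow> (nat \<Rightarrow> real^3) set" where
  "sphere_tuples n = {x. (\<forall>s<n. norm (x s) = 1) \<and> (\<forall>s\<ge>n. x s = 0)}"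

end

theory Submission
  imports Defs
begin

text \<open>Since every factor satisfies \<open>\<langle>x\<^sub>s, y\<^sub>s\<rangle>\<^sup>2 \<le> 1\<close>, the probability is at least
  \<open>E \<Prod>\<^sub>s\<in>S \<langle>x\<^sub>s, y\<^sub>s\<rangle>\<^sup>2\<close>. As \<open>\<langle>u, v\<rangle>\<^sup>2 = \<langle>u u\<^sup>T, v v\<^sup>T\<rangle>\<close>, this expectation is the squared
  Frobenius norm of the average \<open>M\<close> of the tensor products \<open>\<Otimes>\<^sub>s\<in>S x\<^sub>s x\<^sub>s\<^sup>T\<close>, a matrix of
  dimension \<open>3\<^bsup>|S|\<^esup>\<close> and trace \<open>1\<close>. Keeping only its diagonal and applying Cauchy-Schwarz,
  \<open>\<parallel>M\<parallel>\<^sup>2 \<ge> tr(M)\<^sup>2 / 3\<^bsup>|S|\<^esup>\<close>. The tensor product is unfolded one coordinate \<open>s\<close> at a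
  time, which forces arbitrary real weights \<open>w\<close> on the points: \<open>overlap_form C S w\<close> is the
  squared Frobenius norm of \<open>\<Sum>\<^sub>x w x \<Otimes>\<^sub>s\<in>S x\<^sub>s x\<^sub>s\<^sup>T\<close>.\<close>

definition overlap_form :: "('i \<Rightarrow> real^'n) set \<Rightarrow> 'i set \<Rightarrow> (('i \<Rightarrow> real^'n) \<Rightarrow> real) \<Rightarrow> real"
  where "overlap_form C S w = (\<Sum>x\<in>C. \<Sum>y\<in>C. w x * w y * (\<Prod>s\<in>S. (inner (x s) (y s))\<^sup>2))"

lemma power2_inner_vec_eq_double_sum:
  fixes u v :: "real^'n"
  shows "(inner u v)\<^sup>2 = (\<Sum>i\<in>UNIV. \<Sum>j\<in>UNIV. (u $ i * u $ j) * (v $ i * v $ j))"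
  unfolding inner_vec_def power2_eq_square sum_product by (simp add: algebra_simps)

lemma overlap_form_empty: "overlap_form C {} w = (\<Sum>x\<in>C. w x)\<^sup>2"
  unfolding overlap_form_def power2_eq_square sum_product by simp

lemma overlap_form_insert:
  assumes "finite S" and "t \<notin> S"
  shows "overlap_form C (insert t S) w
    = (\<Sum>i\<in>UNIV. \<Sum>j\<in>UNIV. overlap_form C S (\<lambda>x. w x * (x t $ i * x t $ j)))"
proof -
  define g where "g x y i j = (w x * (x t $ i * x t $ j)) * (w y * (y t $ i * y t $ j))
    * (\<Prod>s\<in>S. (inner (x s) (y s))\<^sup>2)" for x y i j
  have "w x * w y * (\<Prod>s\<in>insert t S. (inner (x s) (y s))\<^sup>2) = (\<Sum>i\<in>UNIV. \<Sum>j\<in>UNIV. g x y i j)"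
    for x y
    using assms
    by (simp add: g_def power2_inner_vec_eq_double_sum sum_distrib_left sum_distrib_right mult_ac)
  then have "overlap_form C (insert t S) w = (\<Sum>x\<in>C. \<Sum>y\<in>C. \<Sum>i\<in>UNIV. \<Sum>j\<in>UNIV. g x y i j)"
    by (simp add: overlap_form_def)
  also have "\<dots> = (\<Sum>i\<in>UNIV. \<Sum>j\<in>UNIV. \<Sum>x\<in>C. \<Sum>y\<in>C. g x y i j)"
    by (simp only: sum.swap[where A = C and B = "UNIV :: 'n set"])
  finally show ?thesis
    by (simp add: overlap_form_def g_def)
qed

lemma overlap_form_nonneg:
  assumes "finite S"
  shows "overlap_form C S w \<ge> 0"
  using assms
proof (induction S arbitrary: w rule: finite_induct)
  case empty
  then show ?case by (simp add: overlap_form_empty)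
next
  case (insert t S)
  then show ?case by (simp add: overlap_form_insert sum_nonneg)
qed

lemma overlap_form_lower_bound:
  assumes "finite S" and "\<forall>x\<in>C. \<forall>s\<in>S. norm (x s) = 1"
  shows "(\<Sum>x\<in>C. w x)\<^sup>2 / CARD('n) ^ card S \<le> overlap_form C S (w :: ('i \<Rightarrow> real^'n) \<Rightarrow> real)"
  using assms
proof (induction S arbitrary: w rule: finite_induct)
  case empty
  then show ?case by (simp add: overlap_form_empty)
next
  case (insert t S)
  define a where "a i = (\<Sum>x\<in>C. w x * (x t $ i * x t $ i))" for i
  have trace: "(\<Sum>i\<in>UNIV. a i) = (\<Sum>x\<in>C. w x)"
  proof -
    have "(\<Sum>i\<in>UNIV. x t $ i * x t $ i) = 1" if "x \<in> C" for x
    proof -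
      have "inner (x t) (x t) = 1"
        using that insert.prems by (simp flip: power2_norm_eq_inner)
      then show ?thesis by (simp add: inner_vec_def)
    qed
    then show ?thesis
      by (simp add: a_def sum.swap[of _ C] flip: sum_distrib_left)
  qed
  have "(\<Sum>x\<in>C. w x)\<^sup>2 / CARD('n) ^ card (insert t S)
      = (\<Sum>i\<in>UNIV. a i)\<^sup>2 / (CARD('n) * CARD('n) ^ card S)"
    using insert.hyps by (simp add: trace)
  also have "\<dots> \<le> (\<Sum>i\<in>UNIV. (a i)\<^sup>2) / CARD('n) ^ card S"
    using sum_squared_le_sum_of_squares[of a UNIV] by (simp add: field_simps)
  also have "\<dots> \<le> (\<Sum>i\<in>UNIV. overlap_form C S (\<lambda>x. w x * (x t $ i * x t $ i)))"
    unfolding sum_divide_distrib a_def using insert.prems by (intro sum_mono insert.IH) auto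
  also have "\<dots> \<le> (\<Sum>i\<in>UNIV. \<Sum>j\<in>UNIV. overlap_form C S (\<lambda>x. w x * (x t $ i * x t $ j)))"
  proof (rule sum_mono)
    fix i
    show "overlap_form C S (\<lambda>x. w x * (x t $ i * x t $ i))
      \<le> (\<Sum>j\<in>UNIV. overlap_form C S (\<lambda>x. w x * (x t $ i * x t $ j)))"
      using member_le_sum[of i UNIV "\<lambda>j. overlap_form C S (\<lambda>x. w x * (x t $ i * x t $ j))"]
      by (simp add: overlap_form_nonneg insert.hyps)
  qed
  also have "\<dots> = overlap_form C (insert t S) w"
    using insert.hyps by (simp add: overlap_form_insert)
  finally show ?case .
qed

lemma overlap_form_le_card_nonorthogonal_pairs:
  fixes C :: "('i \<Rightarrow> real^'n) set"
  assumes "finite C" and "finite S" and "\<forall>x\<in>C. \<forall>s\<in>S. norm (x s) = 1"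
  shows "overlap_form C S (\<lambda>_. 1) \<le> real (card {(x, y) \<in> C \<times> C. \<forall>s\<in>S. inner (x s) (y s) \<noteq> 0})"
    (is "_ \<le> real (card ?A)")
proof -
  define P where "P p = (\<Prod>s\<in>S. (inner (fst p s) (snd p s :: real^'n))\<^sup>2)" for p
  have P_le_1: "P p \<le> 1" if "p \<in> C \<times> C" for p
    unfolding P_def
  proof (rule prod_le_1)
    fix s assume "s \<in> S"
    have "\<bar>inner (fst p s) (snd p s)\<bar> \<le> norm (fst p s) * norm (snd p s)"
      by (rule Cauchy_Schwarz_ineq2)
    also have "\<dots> = 1"
      using assms(3) that \<open>s \<in> S\<close> by (auto simp: mem_Times_iff)
    finally show "0 \<le> (inner (fst p s) (snd p s))\<^sup>2 \<and> (inner (fst p s) (snd p s))\<^sup>2 \<le> 1"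
      by (simp add: abs_square_le_1)
  qed
  have "overlap_form C S (\<lambda>_. 1) = (\<Sum>p\<in>C \<times> C. P p)"
    by (simp add: overlap_form_def P_def sum.cartesian_product case_prod_beta)
  also have "\<dots> = (\<Sum>p\<in>?A. P p)"
    using assms(1,2) by (intro sum.mono_neutral_right) (auto simp: P_def prod_zero_iff)
  also have "\<dots> \<le> (\<Sum>p\<in>?A. 1)"
    using P_le_1 by (intro sum_mono) auto
  finally show ?thesis
    by simp
qed

theorem mainTheorem8:
  fixes n :: nat and C :: "(nat \<Rightarrow> real^3) set" and S :: "nat set"
  assumes "C \<subseteq> sphere_tuples n" and "finite C" and "C \<noteq> {}"
    and "S \<subseteq> {0..<n}"
  shows "real (card {(x, y) \<in> C \<times> C. \<forall>s\<in>S. inner (x s) (y s) \<noteq> 0})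
           / real (card C) ^ 2 \<ge> 3 powr (- real (card S))"
proof -
  have "finite S"
    using assms(4) finite_subset by blast
  moreover have unit: "\<forall>x\<in>C. \<forall>s\<in>S. norm (x s) = 1"
    using assms(1,4) by (force simp: sphere_tuples_def)
  ultimately have "real (card C) ^ 2 / 3 ^ card S \<le> overlap_form C S (\<lambda>_. 1)"
    using overlap_form_lower_bound[of S C "\<lambda>_. 1"] by simp
  also have "\<dots> \<le> real (card {(x, y) \<in> C \<times> C. \<forall>s\<in>S. inner (x s) (y s) \<noteq> 0})"
    using overlap_form_le_card_nonorthogonal_pairs assms(2) \<open>finite S\<close> unit by blast
  finally show ?thesis
    using assms(2,3) by (simp add: powr_minus powr_realpow card_gt_0_iff field_simps)
qed

end
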